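(* Let $\Lambda$ be a finite-dimensional algebra over an algebraically closed field $k$ and let $M_1,M_2$ be non-isomorphic finitely generated $\Lambda$-modules that are bricks, i.e. $\mathrm{End}_\Lambda(M_i)\simeq k$ for $i=1,2$. Then $\mathrm{End}_\Lambda(M_1\oplus M_2)$ is symmetric if and only if $\mathrm{Hom}_\Lambda(M_1,M_2)=\mathrm{Hom}_\Lambda(M_2,M_1)=0$.
   Context: Symmetric: the algebra is isomorphic to its $k$-dual as a bimodule. *)

theory Defs
  imports "Jordan_Normal_Form.Matrix" "HOL-Computational_Algebra.Polynomial"
begin

definition alg_closed :: "'k::field itself \<Rightarrow> bool" where
  "alg_closed _ \<longleftrightarrow> (\<forall>p :: 'k poly. degree p > 0 \<longrightarrow> (\<exists>x. poly p x = 0))"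

definition fd_algebra :: "('k::field \<Rightarrow> 'a::ring_1 \<Rightarrow> 'a) \<Rightarrow> bool" where
  "fd_algebra scale \<longleftrightarrow>
     vector_space scale \<and>
     (\<exists>B. finite_dimensional_vector_space scale B) \<and>
     (\<forall>c a b. scale c (a * b) = scale c a * b \<and> scale c (a * b) = a * scale c b)"

text \<open>A finitely generated (= finite-dimensional) left module over the algebra,
  realised on k^n: a k-linear unital ring homomorphism rho from the algebra into
  the n x n matrices over k.\<close>
definition is_module :: "('k::field \<Rightarrow> 'a::ring_1 \<Rightarrow> 'a) \<Rightarrow> nat \<Rightarrow> ('a \<Rightarrow> 'k mat) \<Rightarrow> bool" where
  "is_module scale n rho \<longleftrightarrow>
     (\<forall>a. rho a \<in> carrier_mat n n) \<and>
     rho 1 = 1\<^sub>m n \<and>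
     (\<forall>a b. rho (a + b) = rho a + rho b) \<and>
     (\<forall>a b. rho (a * b) = rho a * rho b) \<and>
     (\<forall>c a. rho (scale c a) = c \<cdot>\<^sub>m rho a)"

definition hom_mod :: "nat \<Rightarrow> ('a \<Rightarrow> 'k::field mat) \<Rightarrow> nat \<Rightarrow> ('a \<Rightarrow> 'k mat) \<Rightarrow> 'k mat set" where
  "hom_mod m rho n sigma = {f \<in> carrier_mat n m. \<forall>a. f * rho a = sigma a * f}"

definition end_mod :: "nat \<Rightarrow> ('a \<Rightarrow> 'k::field mat) \<Rightarrow> 'k mat set" where
  "end_mod n rho = hom_mod n rho n rho"

definition iso_mod :: "nat \<Rightarrow> ('a \<Rightarrow> 'k::field mat) \<Rightarrow> nat \<Rightarrow> ('a \<Rightarrow> 'k mat) \<Rightarrow> bool" where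
  "iso_mod m rho n sigma \<longleftrightarrow>
     (\<exists>f \<in> hom_mod m rho n sigma. \<exists>g \<in> hom_mod n sigma m rho. f * g = 1\<^sub>m n \<and> g * f = 1\<^sub>m m)"

definition dsum_rep :: "nat \<Rightarrow> ('a \<Rightarrow> 'k::field mat) \<Rightarrow> nat \<Rightarrow> ('a \<Rightarrow> 'k mat) \<Rightarrow> 'a \<Rightarrow> 'k mat" where
  "dsum_rep n1 rho1 n2 rho2 = (\<lambda>a. four_block_mat (rho1 a) (0\<^sub>m n1 n2) (0\<^sub>m n2 n1) (rho2 a))"

definition brick :: "nat \<Rightarrow> ('a \<Rightarrow> 'k::field mat) \<Rightarrow> bool" where
  "brick n rho \<longleftrightarrow>
     (\<exists>\<phi>. bij_betw \<phi> (end_mod n rho) (UNIV :: 'k set) \<and>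
        (\<forall>f \<in> end_mod n rho. \<forall>g \<in> end_mod n rho.
            \<phi> (f + g) = \<phi> f + \<phi> g \<and> \<phi> (f * g) = \<phi> f * \<phi> g) \<and>
        (\<forall>c. \<forall>f \<in> end_mod n rho. \<phi> (c \<cdot>\<^sub>m f) = c * \<phi> f) \<and>
        \<phi> (1\<^sub>m n) = 1)"

definition kdual :: "'k::field mat set \<Rightarrow> ('k mat \<Rightarrow> 'k) set" where
  "kdual A = {f. (\<forall>x\<in>A. \<forall>y\<in>A. f (x + y) = f x + f y) \<and>
                 (\<forall>c. \<forall>x\<in>A. f (c \<cdot>\<^sub>m x) = c * f x) \<and>
                 (\<forall>x. x \<notin> A \<longrightarrow> f x = 0)}"

text \<open>A (subalgebra of matrices) is symmetric: A is isomorphic to D(A) as an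
  A-A-bimodule, where (a . f . b)(y) = f (b * y * a).\<close>
definition symmetric_alg :: "'k::field mat set \<Rightarrow> bool" where
  "symmetric_alg A \<longleftrightarrow>
     (\<exists>\<Phi>. bij_betw \<Phi> A (kdual A) \<and>
        (\<forall>x\<in>A. \<forall>y\<in>A. \<Phi> (x + y) = (\<lambda>z. \<Phi> x z + \<Phi> y z)) \<and>
        (\<forall>c. \<forall>x\<in>A. \<Phi> (c \<cdot>\<^sub>m x) = (\<lambda>z. c * \<Phi> x z)) \<and>
        (\<forall>a\<in>A. \<forall>x\<in>A. \<forall>b\<in>A.
            \<Phi> (a * x * b) = (\<lambda>y. if y \<in> A then \<Phi> x (b * y * a) else 0)))"

end

theory Submission
  imports Defs
begin

text \<open>Since bricks have scalar endomorphism rings and the two bricks are not isomorphic, every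
  composite \<open>M\<^sub>1 \<rightarrow> M\<^sub>2 \<rightarrow> M\<^sub>1\<close> or \<open>M\<^sub>2 \<rightarrow> M\<^sub>1 \<rightarrow> M\<^sub>2\<close> vanishes (a nonzero scalar would make the
  maps inverse isomorphisms). Hence \<open>E = End(M\<^sub>1 \<oplus> M\<^sub>2)\<close> consists of the block matrices
  \<open>[[a, B], [C, b]]\<close> with scalars \<open>a, b\<close> and \<open>B \<in> Hom(M\<^sub>2, M\<^sub>1)\<close>, \<open>C \<in> Hom(M\<^sub>1, M\<^sub>2)\<close>, and the
  radical parts multiply to zero. A bimodule isomorphism \<open>E \<cong> D(E)\<close> is \<open>x \<mapsto> u(x \<cdot> _)\<close> for the
  symmetric nondegenerate form \<open>u = \<Phi>(1)\<close>. For \<open>B \<noteq> 0\<close> and \<open>e = [[1, 0], [0, 0]]\<close>, the matrix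
  \<open>N = [[0, B], [0, 0]]\<close> satisfies \<open>u(N) = u(e N) = u(N e) = 0\<close> and \<open>N E \<subseteq> k N\<close>, so
  \<open>u(N E) = 0\<close>, contradicting nondegeneracy; likewise for \<open>C\<close>. Conversely, if both Hom spaces vanish then \<open>E \<cong> k \<times> k\<close>, which
  is symmetric.\<close>

lemma one_smult_mat [simp]: "(1::'a::semiring_1) \<cdot>\<^sub>m A = A"
  by (rule eq_matI) auto

lemma zero_smult_mat [simp]: "(0::'a::semiring_1) \<cdot>\<^sub>m A = 0\<^sub>m (dim_row A) (dim_col A)"
  by (rule eq_matI) auto

lemma smult_smult_mat [simp]: "(a::'a::semigroup_mult) \<cdot>\<^sub>m (b \<cdot>\<^sub>m A) = (a * b) \<cdot>\<^sub>m A"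
  by (rule eq_matI) (auto simp: mult.assoc)

lemma smult_mat_cancel_right:
  fixes A :: "'a::field mat"
  assumes "c \<cdot>\<^sub>m A = d \<cdot>\<^sub>m A" and "A \<noteq> 0\<^sub>m (dim_row A) (dim_col A)"
  shows "c = d"
proof -
  obtain i j where "i < dim_row A" "j < dim_col A" "A $$ (i, j) \<noteq> 0"
    using assms(2) by (metis eq_matI index_zero_mat)
  with arg_cong[OF assms(1), of "\<lambda>M. M $$ (i, j)"] show ?thesis by simp
qed

lemma scalar_one_mult_mat:
  "A \<in> carrier_mat n m \<Longrightarrow> ((a::'a::comm_ring_1) \<cdot>\<^sub>m 1\<^sub>m n) * A = a \<cdot>\<^sub>m A"
  by (simp add: mult_smult_assoc_mat[OF one_carrier_mat])

lemma mult_scalar_one_mat: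
  "A \<in> carrier_mat n m \<Longrightarrow> A * ((a::'a::comm_ring_1) \<cdot>\<^sub>m 1\<^sub>m m) = a \<cdot>\<^sub>m A"
  by (simp add: mult_smult_distrib[OF _ one_carrier_mat])

lemma split_block_four_block_mat:
  assumes "A \<in> carrier_mat nr1 nc1" "B \<in> carrier_mat nr1 nc2"
    "C \<in> carrier_mat nr2 nc1" "D \<in> carrier_mat nr2 nc2"
  shows "split_block (four_block_mat A B C D) nr1 nc1 = (A, B, C, D)"
  using assms unfolding split_block_def Let_def by (auto intro!: eq_matI)

lemma four_block_mat_eq_iff:
  assumes "A \<in> carrier_mat nr1 nc1" "B \<in> carrier_mat nr1 nc2"
    "C \<in> carrier_mat nr2 nc1" "D \<in> carrier_mat nr2 nc2"
    and "A' \<in> carrier_mat nr1 nc1" "B' \<in> carrier_mat nr1 nc2"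
    "C' \<in> carrier_mat nr2 nc1" "D' \<in> carrier_mat nr2 nc2"
  shows "four_block_mat A B C D = four_block_mat A' B' C' D' \<longleftrightarrow>
    A = A' \<and> B = B' \<and> C = C' \<and> D = D'"
  using split_block_four_block_mat[OF assms(1-4)] split_block_four_block_mat[OF assms(5-8)]
  by (metis prod.inject)

lemma four_block_mat_commute_block_diag_iff:
  fixes A :: "'a::comm_ring_1 mat"
  assumes c: "A \<in> carrier_mat n1 n1" "B \<in> carrier_mat n1 n2" "C \<in> carrier_mat n2 n1" "D \<in> carrier_mat n2 n2"
    and r: "R1 \<in> carrier_mat n1 n1" "R2 \<in> carrier_mat n2 n2"
  shows "four_block_mat A B C D * four_block_mat R1 (0\<^sub>m n1 n2) (0\<^sub>m n2 n1) R2 =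
      four_block_mat R1 (0\<^sub>m n1 n2) (0\<^sub>m n2 n1) R2 * four_block_mat A B C D \<longleftrightarrow>
    A * R1 = R1 * A \<and> B * R2 = R1 * B \<and> C * R1 = R2 * C \<and> D * R2 = R2 * D"
proof -
  have "four_block_mat A B C D * four_block_mat R1 (0\<^sub>m n1 n2) (0\<^sub>m n2 n1) R2 =
      four_block_mat (A * R1) (B * R2) (C * R1) (D * R2)"
    using c r by (subst mult_four_block_mat[OF c r(1) zero_carrier_mat zero_carrier_mat r(2)]) auto
  moreover have "four_block_mat R1 (0\<^sub>m n1 n2) (0\<^sub>m n2 n1) R2 * four_block_mat A B C D =
      four_block_mat (R1 * A) (R1 * B) (R2 * C) (R2 * D)"
    using c r by (subst mult_four_block_mat[OF r(1) zero_carrier_mat zero_carrier_mat r(2) c]) auto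
  ultimately show ?thesis
    using four_block_mat_eq_iff[of "A * R1" n1 n1 "B * R2" n2 "C * R1" n2 "D * R2"
        "R1 * A" "R1 * B" "R2 * C" "R2 * D"] c r
    by auto
qed

lemma is_module_carrier: "is_module scale n rho \<Longrightarrow> rho a \<in> carrier_mat n n"
  unfolding is_module_def by auto

lemma hom_mod_carrier: "f \<in> hom_mod m rho n sigma \<Longrightarrow> f \<in> carrier_mat n m"
  unfolding hom_mod_def by auto

lemma zero_mem_hom_mod:
  assumes "is_module scale m rho" and "is_module scale n sigma"
  shows "0\<^sub>m n m \<in> hom_mod m rho n (sigma :: 'a::ring_1 \<Rightarrow> 'k::field mat)"
proof -
  have "0\<^sub>m n m * rho a = sigma a * 0\<^sub>m n m" for a
    using assms[THEN is_module_carrier] by (metis left_mult_zero_mat right_mult_zero_mat)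
  then show ?thesis unfolding hom_mod_def by auto
qed

lemma smult_mem_hom_mod:
  assumes "is_module scale m rho" and "is_module scale n sigma"
    and f: "f \<in> hom_mod m rho n (sigma :: 'a::ring_1 \<Rightarrow> 'k::field mat)"
  shows "c \<cdot>\<^sub>m f \<in> hom_mod m rho n sigma"
  using f assms(1,2)[THEN is_module_carrier] unfolding hom_mod_def
  by (auto simp: mult_smult_assoc_mat[of _ n m _ m] mult_smult_distrib[of _ n n _ m])

lemma scalar_mat_mem_end_mod:
  assumes "is_module scale n (rho :: 'a::ring_1 \<Rightarrow> 'k::field mat)"
  shows "c \<cdot>\<^sub>m 1\<^sub>m n \<in> end_mod n rho"
proof -
  note r = is_module_carrier[OF assms]
  show ?thesis
    unfolding end_mod_def hom_mod_def
    using scalar_one_mult_mat[OF r] mult_scalar_one_mat[OF r] by simp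
qed

lemma mult_mem_hom_mod:
  assumes r: "is_module scale l rho" and s: "is_module scale m sigma" and t: "is_module scale n tau"
    and f: "f \<in> hom_mod l rho m sigma" and g: "g \<in> hom_mod m sigma n tau"
  shows "g * f \<in> hom_mod l rho n (tau :: 'a::ring_1 \<Rightarrow> 'k::field mat)"
proof -
  have fc: "f \<in> carrier_mat m l" and gc: "g \<in> carrier_mat n m"
    using f g by (auto dest: hom_mod_carrier)
  note rc = is_module_carrier[OF r] and sc = is_module_carrier[OF s] and tc = is_module_carrier[OF t]
  have "g * f * rho a = tau a * (g * f)" for a
  proof -
    have "g * f * rho a = g * (f * rho a)" using assoc_mult_mat[OF gc fc rc] .
    also have "\<dots> = (g * sigma a) * f" using f assoc_mult_mat[OF gc sc fc] by (simp add: hom_mod_def)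
    also have "\<dots> = tau a * (g * f)" using g assoc_mult_mat[OF tc gc fc] by (simp add: hom_mod_def)
    finally show ?thesis .
  qed
  with fc gc show ?thesis unfolding hom_mod_def by auto
qed

lemma brick_scalar_coordinate:
  assumes m: "is_module scale n rho" and b: "brick n rho"
  obtains \<phi> :: "'k::field mat \<Rightarrow> 'k"
  where "inj_on \<phi> (end_mod n rho)" and "\<And>c. \<phi> (c \<cdot>\<^sub>m 1\<^sub>m n) = c"
proof -
  obtain \<phi> where bij: "bij_betw \<phi> (end_mod n rho) (UNIV :: 'k set)"
    and sm: "\<forall>c. \<forall>f \<in> end_mod n rho. \<phi> (c \<cdot>\<^sub>m f) = c * \<phi> f" and one: "\<phi> (1\<^sub>m n) = 1"
    using b unfolding brick_def by blast
  have "\<phi> (c \<cdot>\<^sub>m 1\<^sub>m n) = c" for c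
    using sm one scalar_mat_mem_end_mod[OF m, of 1] by simp
  with bij that show ?thesis unfolding bij_betw_def by blast
qed

lemma brick_dim_pos:
  assumes "is_module scale n rho" and "brick n (rho :: 'a::ring_1 \<Rightarrow> 'k::field mat)"
  shows "0 < n"
proof (rule ccontr)
  assume "\<not> 0 < n"
  then have "(0::'k) \<cdot>\<^sub>m 1\<^sub>m n = 1 \<cdot>\<^sub>m 1\<^sub>m n" by (auto intro!: eq_matI)
  with brick_scalar_coordinate[OF assms] show False by (metis zero_neq_one)
qed

lemma brick_end_mod_scalar:
  assumes m: "is_module scale n rho" and "brick n rho" and f: "f \<in> end_mod n rho"
  obtains c :: "'k::field" where "f = c \<cdot>\<^sub>m 1\<^sub>m n"
proof -
  obtain \<phi> where inj: "inj_on \<phi> (end_mod n rho)" and \<phi>: "\<And>c. \<phi> (c \<cdot>\<^sub>m 1\<^sub>m n) = c"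
    using brick_scalar_coordinate[OF assms(1,2)] by blast
  have "\<phi> f \<cdot>\<^sub>m 1\<^sub>m n = f"
    using inj_onD[OF inj _ scalar_mat_mem_end_mod[OF m] f] \<phi> by metis
  then show ?thesis using that by metis
qed

lemma nonisomorphic_bricks_hom_comp_zero:
  fixes rho1 rho2 :: "'a::ring_1 \<Rightarrow> 'k::field mat"
  assumes m1: "is_module scale n1 rho1" and m2: "is_module scale n2 rho2"
    and b1: "brick n1 rho1" and b2: "brick n2 rho2"
    and not_iso: "\<not> iso_mod n1 rho1 n2 rho2"
    and g: "g \<in> hom_mod n2 rho2 n1 rho1" and h: "h \<in> hom_mod n1 rho1 n2 rho2"
  shows "g * h = 0\<^sub>m n1 n1 \<and> h * g = 0\<^sub>m n2 n2"
proof -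
  have gc: "g \<in> carrier_mat n1 n2" and hc: "h \<in> carrier_mat n2 n1"
    using g h by (auto dest: hom_mod_carrier)
  obtain c where c: "g * h = c \<cdot>\<^sub>m 1\<^sub>m n1"
    using brick_end_mod_scalar[OF m1 b1] mult_mem_hom_mod[OF m1 m2 m1 h g]
    unfolding end_mod_def by blast
  obtain d where d: "h * g = d \<cdot>\<^sub>m 1\<^sub>m n2"
    using brick_end_mod_scalar[OF m2 b2] mult_mem_hom_mod[OF m2 m1 m2 g h]
    unfolding end_mod_def by blast
  show ?thesis
  proof (cases "h = 0\<^sub>m n2 n1")
    case True
    with gc show ?thesis by simp
  next
    case False
    have "c \<cdot>\<^sub>m h = h * (g * h)" using c hc by (simp add: mult_scalar_one_mat)
    also have "\<dots> = (h * g) * h" using assoc_mult_mat[OF hc gc hc] by simp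
    also have "\<dots> = d \<cdot>\<^sub>m h" using d hc by (simp add: scalar_one_mult_mat)
    finally have "c = d" using False hc by (intro smult_mat_cancel_right) auto
    show ?thesis
    proof (cases "c = 0")
      case True
      with c d \<open>c = d\<close> show ?thesis by simp
    next
      case False
      let ?g = "inverse c \<cdot>\<^sub>m g"
      have "h * ?g = 1\<^sub>m n2" using d \<open>c = d\<close> False by (simp add: mult_smult_distrib[OF hc gc])
      moreover have "?g * h = 1\<^sub>m n1" using c False by (simp add: mult_smult_assoc_mat[OF gc hc])
      ultimately have "iso_mod n1 rho1 n2 rho2"
        unfolding iso_mod_def using h smult_mem_hom_mod[OF m2 m1 g] by blast
      with not_iso show ?thesis by simp
    qed
  qed
qed

lemma four_block_mat_mem_end_dsum_iff:
  fixes rho1 rho2 :: "'a::ring_1 \<Rightarrow> 'k::field mat"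
  assumes m1: "is_module scale n1 rho1" and m2: "is_module scale n2 rho2"
    and c: "A \<in> carrier_mat n1 n1" "B \<in> carrier_mat n1 n2" "C \<in> carrier_mat n2 n1" "D \<in> carrier_mat n2 n2"
  shows "four_block_mat A B C D \<in> end_mod (n1 + n2) (dsum_rep n1 rho1 n2 rho2) \<longleftrightarrow>
    A \<in> end_mod n1 rho1 \<and> B \<in> hom_mod n2 rho2 n1 rho1 \<and> C \<in> hom_mod n1 rho1 n2 rho2 \<and>
    D \<in> end_mod n2 rho2"
  using c four_block_mat_commute_block_diag_iff[OF c m1[THEN is_module_carrier] m2[THEN is_module_carrier]]
  unfolding end_mod_def hom_mod_def dsum_rep_def by auto

definition scalar_corner_block :: "nat \<Rightarrow> nat \<Rightarrow> 'k::field \<Rightarrow> 'k mat \<Rightarrow> 'k mat \<Rightarrow> 'k \<Rightarrow> 'k mat" where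
  "scalar_corner_block n1 n2 a B C b = four_block_mat (a \<cdot>\<^sub>m 1\<^sub>m n1) B C (b \<cdot>\<^sub>m 1\<^sub>m n2)"

lemma end_dsum_bricks_iff:
  fixes rho1 rho2 :: "'a::ring_1 \<Rightarrow> 'k::field mat"
  assumes m1: "is_module scale n1 rho1" and m2: "is_module scale n2 rho2"
    and b1: "brick n1 rho1" and b2: "brick n2 rho2"
  shows "x \<in> end_mod (n1 + n2) (dsum_rep n1 rho1 n2 rho2) \<longleftrightarrow>
    (\<exists>a B C b. B \<in> hom_mod n2 rho2 n1 rho1 \<and> C \<in> hom_mod n1 rho1 n2 rho2 \<and>
       x = scalar_corner_block n1 n2 a B C b)"
proof
  assume x: "x \<in> end_mod (n1 + n2) (dsum_rep n1 rho1 n2 rho2)"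
  then have "x \<in> carrier_mat (n1 + n2) (n1 + n2)" unfolding end_mod_def hom_mod_def by auto
  moreover obtain A B C D where "split_block x n1 n1 = (A, B, C, D)"
    by (metis prod_cases4)
  ultimately have c: "A \<in> carrier_mat n1 n1" "B \<in> carrier_mat n1 n2"
      "C \<in> carrier_mat n2 n1" "D \<in> carrier_mat n2 n2"
    and x_eq: "x = four_block_mat A B C D"
    using split_block[of x n1 n1 A B C D n2 n2] by auto
  have "A \<in> end_mod n1 rho1" "B \<in> hom_mod n2 rho2 n1 rho1" "C \<in> hom_mod n1 rho1 n2 rho2"
    "D \<in> end_mod n2 rho2"
    using four_block_mat_mem_end_dsum_iff[OF m1 m2 c] x x_eq by auto
  moreover obtain a b where "A = a \<cdot>\<^sub>m 1\<^sub>m n1" "D = b \<cdot>\<^sub>m 1\<^sub>m n2"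
    using brick_end_mod_scalar[OF m1 b1] brick_end_mod_scalar[OF m2 b2] calculation by metis
  ultimately show "\<exists>a B C b. B \<in> hom_mod n2 rho2 n1 rho1 \<and> C \<in> hom_mod n1 rho1 n2 rho2 \<and>
      x = scalar_corner_block n1 n2 a B C b"
    unfolding scalar_corner_block_def using x_eq by blast
next
  assume "\<exists>a B C b. B \<in> hom_mod n2 rho2 n1 rho1 \<and> C \<in> hom_mod n1 rho1 n2 rho2 \<and>
      x = scalar_corner_block n1 n2 a B C b"
  then obtain a B C b where B: "B \<in> hom_mod n2 rho2 n1 rho1" and C: "C \<in> hom_mod n1 rho1 n2 rho2"
    and x: "x = scalar_corner_block n1 n2 a B C b"
    by blast
  show "x \<in> end_mod (n1 + n2) (dsum_rep n1 rho1 n2 rho2)"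
    unfolding x scalar_corner_block_def
    using four_block_mat_mem_end_dsum_iff[OF m1 m2 _ hom_mod_carrier[OF B] hom_mod_carrier[OF C]]
      scalar_mat_mem_end_mod[OF m1] scalar_mat_mem_end_mod[OF m2] B C
    by auto
qed

lemma scalar_corner_block_mult:
  fixes B :: "'k::field mat"
  assumes c: "B \<in> carrier_mat n1 n2" "C \<in> carrier_mat n2 n1"
    "B' \<in> carrier_mat n1 n2" "C' \<in> carrier_mat n2 n1"
  shows "scalar_corner_block n1 n2 a B C b * scalar_corner_block n1 n2 a' B' C' b' =
    four_block_mat ((a * a') \<cdot>\<^sub>m 1\<^sub>m n1 + B * C') (a \<cdot>\<^sub>m B' + b' \<cdot>\<^sub>m B)
      (a' \<cdot>\<^sub>m C + b \<cdot>\<^sub>m C') (C * B' + (b * b') \<cdot>\<^sub>m 1\<^sub>m n2)"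
  unfolding scalar_corner_block_def
  using c by (subst mult_four_block_mat[OF _ c(1,2) _ _ c(3,4)])
    (auto simp: scalar_one_mult_mat mult_scalar_one_mat)

lemma smult_scalar_corner_block:
  assumes "B \<in> carrier_mat n1 n2" "C \<in> carrier_mat n2 n1"
  shows "c \<cdot>\<^sub>m scalar_corner_block n1 n2 a B C b =
    scalar_corner_block n1 n2 (c * a) (c \<cdot>\<^sub>m B) (c \<cdot>\<^sub>m C) (c * b)"
  unfolding scalar_corner_block_def using assms by (subst smult_four_block_mat) auto

lemma scalar_corner_block_zero_iff:
  assumes "B \<in> carrier_mat n1 n2" "C \<in> carrier_mat n2 n1"
  shows "scalar_corner_block n1 n2 0 B C 0 = 0\<^sub>m (n1 + n2) (n1 + n2) \<longleftrightarrow>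
    B = 0\<^sub>m n1 n2 \<and> C = 0\<^sub>m n2 n1"
  unfolding scalar_corner_block_def four_block_zero_mat[symmetric]
  using assms by (subst four_block_mat_eq_iff) auto

definition scalar_block_diag :: "nat \<Rightarrow> nat \<Rightarrow> 'k::field \<Rightarrow> 'k \<Rightarrow> 'k mat" where
  "scalar_block_diag n1 n2 a b = scalar_corner_block n1 n2 a (0\<^sub>m n1 n2) (0\<^sub>m n2 n1) b"

lemma scalar_block_diag_mult:
  "scalar_block_diag n1 n2 a b * scalar_block_diag n1 n2 c d = scalar_block_diag n1 n2 (a * c) (b * d)"
  unfolding scalar_block_diag_def
  by (simp add: scalar_corner_block_mult; simp add: scalar_corner_block_def)

lemma scalar_block_diag_add:
  "scalar_block_diag n1 n2 a b + scalar_block_diag n1 n2 c d = scalar_block_diag n1 n2 (a + c) (b + d)"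
  unfolding scalar_block_diag_def scalar_corner_block_def
  by (subst add_four_block_mat[of _ n1 n1 _ n2 _ n2]) (auto simp: add_smult_distrib_right_mat)

lemma smult_scalar_block_diag:
  "c \<cdot>\<^sub>m scalar_block_diag n1 n2 a b = scalar_block_diag n1 n2 (c * a) (c * b)"
  unfolding scalar_block_diag_def by (simp add: smult_scalar_corner_block)

lemma scalar_block_diag_index:
  assumes "0 < n1" "0 < n2"
  shows "scalar_block_diag n1 n2 a b $$ (0, 0) = a" "scalar_block_diag n1 n2 a b $$ (n1, n1) = b"
  using assms unfolding scalar_block_diag_def scalar_corner_block_def by auto

lemma scalar_block_diag_mem_end_dsum:
  assumes m1: "is_module scale n1 rho1" and m2: "is_module scale n2 (rho2 :: 'a::ring_1 \<Rightarrow> 'k::field mat)"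
  shows "scalar_block_diag n1 n2 a b \<in> end_mod (n1 + n2) (dsum_rep n1 rho1 n2 rho2)"
  unfolding scalar_block_diag_def scalar_corner_block_def
  using four_block_mat_mem_end_dsum_iff[OF m1 m2] scalar_mat_mem_end_mod[OF m1]
    scalar_mat_mem_end_mod[OF m2] zero_mem_hom_mod[OF m1 m2] zero_mem_hom_mod[OF m2 m1]
  by simp

lemma symmetric_alg_symmetrizing_form:
  fixes E :: "'k::field mat set"
  assumes s: "symmetric_alg E" and E: "E \<subseteq> carrier_mat n n"
    and one: "1\<^sub>m n \<in> E" and zero: "0\<^sub>m n n \<in> E"
  obtains u where "u \<in> kdual E"
    and "\<And>x y. x \<in> E \<Longrightarrow> y \<in> E \<Longrightarrow> u (x * y) = u (y * x)"
    and "\<And>x. x \<in> E \<Longrightarrow> (\<And>y. y \<in> E \<Longrightarrow> u (x * y) = 0) \<Longrightarrow> x = 0\<^sub>m n n"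
proof -
  obtain \<Phi> where bij: "bij_betw \<Phi> E (kdual E)"
    and bimod: "\<forall>a\<in>E. \<forall>x\<in>E. \<forall>b\<in>E. \<Phi> (a * x * b) = (\<lambda>y. if y \<in> E then \<Phi> x (b * y * a) else 0)"
    using s unfolding symmetric_alg_def by blast
  define u where "u = \<Phi> (1\<^sub>m n)"
  have u: "u \<in> kdual E" using bij one unfolding u_def bij_betw_def by auto
  \<comment> \<open>Moving \<open>x\<close> to either side of \<open>1\<close> in the bimodule law: \<open>\<Phi> x y = u (x y) = u (y x)\<close>.\<close>
  have \<Phi>_left: "\<Phi> x = (\<lambda>y. if y \<in> E then u (x * y) else 0)" if x: "x \<in> E" for x
  proof -
    have "\<Phi> (1\<^sub>m n * 1\<^sub>m n * x) = (\<lambda>y. if y \<in> E then u (x * y * 1\<^sub>m n) else 0)"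
      using bimod one x unfolding u_def by blast
    moreover have "x * y * 1\<^sub>m n = x * y" if "y \<in> E" for y using that x E by auto
    ultimately show ?thesis using x E by (auto intro!: ext)
  qed
  have \<Phi>_right: "\<Phi> x y = u (y * x)" if "x \<in> E" "y \<in> E" for x y
  proof -
    have "\<Phi> (x * 1\<^sub>m n * 1\<^sub>m n) = (\<lambda>y. if y \<in> E then u (1\<^sub>m n * y * x) else 0)"
      using bimod one that unfolding u_def by blast
    moreover have "x * 1\<^sub>m n * 1\<^sub>m n = x" "1\<^sub>m n * y * x = y * x" using that E by auto
    ultimately show ?thesis using that(2) by simp
  qed
  have "u (0 \<cdot>\<^sub>m 1\<^sub>m n) = 0 * u (1\<^sub>m n)" using u one unfolding kdual_def by blast
  then have u_zero: "u (0\<^sub>m n n) = 0" by simp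
  show ?thesis
  proof
    show "u \<in> kdual E" by (fact u)
    show "u (x * y) = u (y * x)" if "x \<in> E" "y \<in> E" for x y
      using \<Phi>_left \<Phi>_right that by metis
    show "x = 0\<^sub>m n n" if x: "x \<in> E" and ann: "\<And>y. y \<in> E \<Longrightarrow> u (x * y) = 0" for x
    proof -
      have "0\<^sub>m n n * y = 0\<^sub>m n n" if "y \<in> E" for y using that E by auto
      then have "\<Phi> x = \<Phi> (0\<^sub>m n n)" using \<Phi>_left[OF x] \<Phi>_left[OF zero] ann u_zero by auto
      then show ?thesis using bij x zero unfolding bij_betw_def inj_on_def by blast
    qed
  qed
qed

lemma symmetric_alg_nilpotent_corner_zero:
  fixes E :: "'k::field mat set"
  assumes s: "symmetric_alg E" and E: "E \<subseteq> carrier_mat n n"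
    and one: "1\<^sub>m n \<in> E" and zero: "0\<^sub>m n n \<in> E"
    and N: "N \<in> E" and e: "e \<in> E" and eN: "e * N = N" and Ne: "N * e = 0\<^sub>m n n"
    and N_right: "\<And>y. y \<in> E \<Longrightarrow> \<exists>c. N * y = c \<cdot>\<^sub>m N"
  shows "N = 0\<^sub>m n n"
proof -
  obtain u where u: "u \<in> kdual E" and comm: "\<And>x y. x \<in> E \<Longrightarrow> y \<in> E \<Longrightarrow> u (x * y) = u (y * x)"
    and nondeg: "\<And>x. x \<in> E \<Longrightarrow> (\<And>y. y \<in> E \<Longrightarrow> u (x * y) = 0) \<Longrightarrow> x = 0\<^sub>m n n"
    using symmetric_alg_symmetrizing_form[OF s E one zero] by blast
  have u_smult: "u (c \<cdot>\<^sub>m x) = c * u x" if "x \<in> E" for c x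
    using u that unfolding kdual_def by blast
  have "u (0\<^sub>m n n) = 0"
    using u_smult[OF one, of 0] by simp
  then have "u N = 0" using comm[OF e N] eN Ne by simp
  then have "u (N * y) = 0" if "y \<in> E" for y
    using N_right[OF that] u_smult[OF N] by auto
  then show ?thesis by (rule nondeg[OF N])
qed

definition scalar_block_diags :: "nat \<Rightarrow> nat \<Rightarrow> 'k::field mat set" where
  "scalar_block_diags n1 n2 = {scalar_block_diag n1 n2 a b |a b. True}"

lemma kdual_scalar_block_diags_coords:
  assumes "f \<in> kdual (scalar_block_diags n1 n2)"
  shows "f (scalar_block_diag n1 n2 a b) =
    a * f (scalar_block_diag n1 n2 1 0) + b * f (scalar_block_diag n1 n2 0 1)"
proof -
  have mem: "scalar_block_diag n1 n2 c d \<in> scalar_block_diags n1 n2" for c d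
    unfolding scalar_block_diags_def by blast
  have add: "f (x + y) = f x + f y"
    if "x \<in> scalar_block_diags n1 n2" "y \<in> scalar_block_diags n1 n2" for x y
    using assms that unfolding kdual_def by auto
  have smult: "f (c \<cdot>\<^sub>m x) = c * f x" if "x \<in> scalar_block_diags n1 n2" for c x
    using assms that unfolding kdual_def by auto
  have "f (scalar_block_diag n1 n2 a b) =
      f (a \<cdot>\<^sub>m scalar_block_diag n1 n2 1 0 + b \<cdot>\<^sub>m scalar_block_diag n1 n2 0 1)"
    by (simp add: smult_scalar_block_diag scalar_block_diag_add)
  also have "\<dots> = f (a \<cdot>\<^sub>m scalar_block_diag n1 n2 1 0) + f (b \<cdot>\<^sub>m scalar_block_diag n1 n2 0 1)"
    by (rule add) (simp_all add: smult_scalar_block_diag mem)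
  also have "\<dots> = a * f (scalar_block_diag n1 n2 1 0) + b * f (scalar_block_diag n1 n2 0 1)"
    using smult[OF mem] by simp
  finally show ?thesis .
qed

text \<open>The pairing \<open>(x, y) \<mapsto> x\<^sub>1y\<^sub>1 + x\<^sub>2y\<^sub>2\<close> on \<open>k \<times> k\<close>, read off the two diagonal scalars; the trace
  \<open>n\<^sub>1x\<^sub>1y\<^sub>1 + n\<^sub>2x\<^sub>2y\<^sub>2\<close> would be degenerate in positive characteristic.\<close>

definition scalar_block_diag_pairing :: "nat \<Rightarrow> nat \<Rightarrow> 'k::field mat \<Rightarrow> 'k mat \<Rightarrow> 'k" where
  "scalar_block_diag_pairing n1 n2 x y =
    (if y \<in> scalar_block_diags n1 n2 then (x * y) $$ (0, 0) + (x * y) $$ (n1, n1) else 0)"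

lemma scalar_block_diag_pairing_diag:
  assumes "0 < n1" "0 < n2"
  shows "scalar_block_diag_pairing n1 n2 (scalar_block_diag n1 n2 a b) (scalar_block_diag n1 n2 c d) =
    a * c + b * d"
  using assms unfolding scalar_block_diag_pairing_def scalar_block_diags_def
  by (auto simp: scalar_block_diag_mult scalar_block_diag_index)

lemma scalar_block_diag_pairing_mem_kdual:
  assumes p1: "0 < n1" and p2: "0 < n2"
  shows "scalar_block_diag_pairing n1 n2 (scalar_block_diag n1 n2 a b) \<in>
    kdual (scalar_block_diags n1 n2 :: 'k::field mat set)"
proof -
  let ?D = "scalar_block_diag n1 n2" and ?E = "scalar_block_diags n1 n2 :: 'k mat set"
  let ?\<Phi> = "scalar_block_diag_pairing n1 n2 (?D a b)"
  note \<Phi>_diag = scalar_block_diag_pairing_diag[OF p1 p2]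
  show ?thesis unfolding kdual_def
  proof (intro CollectI conjI allI ballI impI)
    fix y z assume "y \<in> ?E" "z \<in> ?E"
    then obtain c d c' d' where "y = ?D c d" "z = ?D c' d'" unfolding scalar_block_diags_def by blast
    then show "?\<Phi> (y + z) = ?\<Phi> y + ?\<Phi> z"
      by (simp add: scalar_block_diag_add \<Phi>_diag algebra_simps)
  next
    fix k y assume "y \<in> ?E"
    then obtain c d where "y = ?D c d" unfolding scalar_block_diags_def by blast
    then show "?\<Phi> (k \<cdot>\<^sub>m y) = k * ?\<Phi> y"
      by (simp add: smult_scalar_block_diag \<Phi>_diag algebra_simps)
  next
    fix y assume "y \<notin> ?E"
    then show "?\<Phi> y = 0" unfolding scalar_block_diag_pairing_def by simp
  qed
qed

lemma bij_betw_scalar_block_diag_pairing: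
  assumes p1: "0 < n1" and p2: "0 < n2"
  shows "bij_betw (scalar_block_diag_pairing n1 n2) (scalar_block_diags n1 n2)
    (kdual (scalar_block_diags n1 n2 :: 'k::field mat set))"
proof -
  let ?D = "scalar_block_diag n1 n2" and ?E = "scalar_block_diags n1 n2 :: 'k mat set"
    and ?\<Phi> = "scalar_block_diag_pairing n1 n2 :: 'k mat \<Rightarrow> 'k mat \<Rightarrow> 'k"
  have mem: "?D a b \<in> ?E" for a b unfolding scalar_block_diags_def by blast
  note \<Phi>_diag = scalar_block_diag_pairing_diag[OF p1 p2]
  have \<Phi>_out: "y \<notin> ?E \<Longrightarrow> ?\<Phi> x y = 0" for x y unfolding scalar_block_diag_pairing_def by simp
  have "inj_on ?\<Phi> ?E"
  proof (rule inj_onI)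
    fix x y assume "x \<in> ?E" "y \<in> ?E" and eq: "?\<Phi> x = ?\<Phi> y"
    then obtain a b c d where xy: "x = ?D a b" "y = ?D c d" unfolding scalar_block_diags_def by blast
    show "x = y"
      using fun_cong[OF eq, of "?D 1 0"] fun_cong[OF eq, of "?D 0 1"] unfolding xy \<Phi>_diag by simp
  qed
  moreover have "?\<Phi> x \<in> kdual ?E" if x: "x \<in> ?E" for x
  proof -
    obtain a b where "x = ?D a b" using x unfolding scalar_block_diags_def by blast
    then show ?thesis using scalar_block_diag_pairing_mem_kdual[OF p1 p2] by simp
  qed
  moreover have "f \<in> ?\<Phi> ` ?E" if f: "f \<in> kdual ?E" for f
  proof -
    have "?\<Phi> (?D (f (?D 1 0)) (f (?D 0 1))) = f"
    proof
      fix y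
      show "?\<Phi> (?D (f (?D 1 0)) (f (?D 0 1))) y = f y"
      proof (cases "y \<in> ?E")
        case True
        then obtain c d where "y = ?D c d" unfolding scalar_block_diags_def by blast
        then show ?thesis by (simp add: \<Phi>_diag kdual_scalar_block_diags_coords[OF f, of c d] mult.commute)
      next
        case False
        then show ?thesis using \<Phi>_out f unfolding kdual_def by simp
      qed
    qed
    then show ?thesis using mem by (metis image_eqI)
  qed
  ultimately show ?thesis unfolding bij_betw_def by blast
qed

lemma symmetric_alg_scalar_block_diags:
  assumes p1: "0 < n1" and p2: "0 < n2"
  shows "symmetric_alg (scalar_block_diags n1 n2 :: 'k::field mat set)"
  unfolding symmetric_alg_def
proof (intro exI conjI)
  let ?D = "scalar_block_diag n1 n2" and ?E = "scalar_block_diags n1 n2 :: 'k mat set"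
    and ?\<Phi> = "scalar_block_diag_pairing n1 n2 :: 'k mat \<Rightarrow> 'k mat \<Rightarrow> 'k"
  note \<Phi>_diag = scalar_block_diag_pairing_diag[OF p1 p2]
  have \<Phi>_out: "y \<notin> ?E \<Longrightarrow> ?\<Phi> x y = 0" for x y unfolding scalar_block_diag_pairing_def by simp
  have diag: "x \<in> ?E \<Longrightarrow> (\<And>a b. x = ?D a b \<Longrightarrow> P) \<Longrightarrow> P" for x P
    unfolding scalar_block_diags_def by blast
  show "bij_betw ?\<Phi> ?E (kdual ?E)" by (rule bij_betw_scalar_block_diag_pairing[OF p1 p2])
  show "\<forall>x\<in>?E. \<forall>y\<in>?E. ?\<Phi> (x + y) = (\<lambda>z. ?\<Phi> x z + ?\<Phi> y z)"
  proof (intro ballI ext)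
    fix x y z assume "x \<in> ?E" "y \<in> ?E"
    then show "?\<Phi> (x + y) z = ?\<Phi> x z + ?\<Phi> y z"
      by (cases "z \<in> ?E") (auto elim!: diag simp: \<Phi>_out \<Phi>_diag scalar_block_diag_add algebra_simps)
  qed
  show "\<forall>c. \<forall>x\<in>?E. ?\<Phi> (c \<cdot>\<^sub>m x) = (\<lambda>z. c * ?\<Phi> x z)"
  proof (intro allI ballI ext)
    fix c x z assume "x \<in> ?E"
    then show "?\<Phi> (c \<cdot>\<^sub>m x) z = c * ?\<Phi> x z"
      by (cases "z \<in> ?E") (auto elim!: diag simp: \<Phi>_out \<Phi>_diag smult_scalar_block_diag algebra_simps)
  qed
  show "\<forall>a\<in>?E. \<forall>x\<in>?E. \<forall>b\<in>?E. ?\<Phi> (a * x * b) = (\<lambda>y. if y \<in> ?E then ?\<Phi> x (b * y * a) else 0)"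
  proof (intro ballI ext)
    fix a x b y assume "a \<in> ?E" "x \<in> ?E" "b \<in> ?E"
    then show "?\<Phi> (a * x * b) y = (if y \<in> ?E then ?\<Phi> x (b * y * a) else 0)"
      by (cases "y \<in> ?E") (auto elim!: diag simp: \<Phi>_out \<Phi>_diag scalar_block_diag_mult algebra_simps)
  qed
qed

lemma end_dsum_unital:
  fixes rho1 rho2 :: "'a::ring_1 \<Rightarrow> 'k::field mat"
  assumes m1: "is_module scale n1 rho1" and m2: "is_module scale n2 rho2"
  shows "end_mod (n1 + n2) (dsum_rep n1 rho1 n2 rho2) \<subseteq> carrier_mat (n1 + n2) (n1 + n2)"
    and "1\<^sub>m (n1 + n2) \<in> end_mod (n1 + n2) (dsum_rep n1 rho1 n2 rho2)"
    and "0\<^sub>m (n1 + n2) (n1 + n2) \<in> end_mod (n1 + n2) (dsum_rep n1 rho1 n2 rho2)"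
  using scalar_block_diag_mem_end_dsum[OF m1 m2, of 1 1] scalar_block_diag_mem_end_dsum[OF m1 m2, of 0 0]
  unfolding end_mod_def hom_mod_def scalar_block_diag_def scalar_corner_block_def by auto

lemma symmetric_end_dsum_hom_21_zero:
  fixes rho1 rho2 :: "'a::ring_1 \<Rightarrow> 'k::field mat"
  assumes m1: "is_module scale n1 rho1" and m2: "is_module scale n2 rho2"
    and b1: "brick n1 rho1" and b2: "brick n2 rho2"
    and not_iso: "\<not> iso_mod n1 rho1 n2 rho2"
    and s: "symmetric_alg (end_mod (n1 + n2) (dsum_rep n1 rho1 n2 rho2))"
    and g: "g \<in> hom_mod n2 rho2 n1 rho1"
  shows "g = 0\<^sub>m n1 n2"
proof -
  let ?E = "end_mod (n1 + n2) (dsum_rep n1 rho1 n2 rho2)"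
    and ?N = "scalar_corner_block n1 n2 0 g (0\<^sub>m n2 n1) 0"
  note E_iff = end_dsum_bricks_iff[OF m1 m2 b1 b2]
  have gc: "g \<in> carrier_mat n1 n2" using g by (rule hom_mod_carrier)
  have "?N = 0\<^sub>m (n1 + n2) (n1 + n2)"
  proof (rule symmetric_alg_nilpotent_corner_zero[OF s end_dsum_unital[OF m1 m2]])
    show "?N \<in> ?E" using E_iff g zero_mem_hom_mod[OF m1 m2] by blast
    show "scalar_block_diag n1 n2 1 0 \<in> ?E" by (rule scalar_block_diag_mem_end_dsum[OF m1 m2])
    show "scalar_block_diag n1 n2 1 0 * ?N = ?N"
      using gc by (simp add: scalar_block_diag_def scalar_corner_block_mult; simp add: scalar_corner_block_def)
    show "?N * scalar_block_diag n1 n2 1 0 = 0\<^sub>m (n1 + n2) (n1 + n2)"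
      using gc by (simp add: scalar_block_diag_def scalar_corner_block_mult)
    show "\<exists>c. ?N * y = c \<cdot>\<^sub>m ?N" if "y \<in> ?E" for y
    proof -
      obtain a B C b where B: "B \<in> hom_mod n2 rho2 n1 rho1" and C: "C \<in> hom_mod n1 rho1 n2 rho2"
        and y: "y = scalar_corner_block n1 n2 a B C b"
        using \<open>y \<in> ?E\<close> E_iff by blast
      have "g * C = 0\<^sub>m n1 n1"
        using nonisomorphic_bricks_hom_comp_zero[OF m1 m2 b1 b2 not_iso g C] by simp
      then have "?N * y = b \<cdot>\<^sub>m ?N"
        using gc hom_mod_carrier[OF B] hom_mod_carrier[OF C] unfolding y
        by (simp add: scalar_corner_block_mult smult_scalar_corner_block;
            simp add: scalar_corner_block_def)
      then show ?thesis by blast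
    qed
  qed
  then show ?thesis using gc by (simp add: scalar_corner_block_zero_iff)
qed

lemma symmetric_end_dsum_hom_12_zero:
  fixes rho1 rho2 :: "'a::ring_1 \<Rightarrow> 'k::field mat"
  assumes m1: "is_module scale n1 rho1" and m2: "is_module scale n2 rho2"
    and b1: "brick n1 rho1" and b2: "brick n2 rho2"
    and not_iso: "\<not> iso_mod n1 rho1 n2 rho2"
    and s: "symmetric_alg (end_mod (n1 + n2) (dsum_rep n1 rho1 n2 rho2))"
    and h: "h \<in> hom_mod n1 rho1 n2 rho2"
  shows "h = 0\<^sub>m n2 n1"
proof -
  let ?E = "end_mod (n1 + n2) (dsum_rep n1 rho1 n2 rho2)"
    and ?N = "scalar_corner_block n1 n2 0 (0\<^sub>m n1 n2) h 0"
  note E_iff = end_dsum_bricks_iff[OF m1 m2 b1 b2]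
  have hc: "h \<in> carrier_mat n2 n1" using h by (rule hom_mod_carrier)
  have "?N = 0\<^sub>m (n1 + n2) (n1 + n2)"
  proof (rule symmetric_alg_nilpotent_corner_zero[OF s end_dsum_unital[OF m1 m2]])
    show "?N \<in> ?E" using E_iff h zero_mem_hom_mod[OF m2 m1] by blast
    show "scalar_block_diag n1 n2 0 1 \<in> ?E" by (rule scalar_block_diag_mem_end_dsum[OF m1 m2])
    show "scalar_block_diag n1 n2 0 1 * ?N = ?N"
      using hc by (simp add: scalar_block_diag_def scalar_corner_block_mult; simp add: scalar_corner_block_def)
    show "?N * scalar_block_diag n1 n2 0 1 = 0\<^sub>m (n1 + n2) (n1 + n2)"
      using hc by (simp add: scalar_block_diag_def scalar_corner_block_mult)
    show "\<exists>c. ?N * y = c \<cdot>\<^sub>m ?N" if "y \<in> ?E" for y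
    proof -
      obtain a B C b where B: "B \<in> hom_mod n2 rho2 n1 rho1" and C: "C \<in> hom_mod n1 rho1 n2 rho2"
        and y: "y = scalar_corner_block n1 n2 a B C b"
        using \<open>y \<in> ?E\<close> E_iff by blast
      have "h * B = 0\<^sub>m n2 n2"
        using nonisomorphic_bricks_hom_comp_zero[OF m1 m2 b1 b2 not_iso B h] by simp
      then have "?N * y = a \<cdot>\<^sub>m ?N"
        using hc hom_mod_carrier[OF B] hom_mod_carrier[OF C] unfolding y
        by (simp add: scalar_corner_block_mult smult_scalar_corner_block;
            simp add: scalar_corner_block_def)
      then show ?thesis by blast
    qed
  qed
  then show ?thesis using hc by (simp add: scalar_corner_block_zero_iff)
qed

lemma end_dsum_eq_scalar_block_diags:
  fixes rho1 rho2 :: "'a::ring_1 \<Rightarrow> 'k::field mat"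
  assumes m1: "is_module scale n1 rho1" and m2: "is_module scale n2 rho2"
    and b1: "brick n1 rho1" and b2: "brick n2 rho2"
    and "hom_mod n1 rho1 n2 rho2 = {0\<^sub>m n2 n1}" and "hom_mod n2 rho2 n1 rho1 = {0\<^sub>m n1 n2}"
  shows "end_mod (n1 + n2) (dsum_rep n1 rho1 n2 rho2) = scalar_block_diags n1 n2"
  using end_dsum_bricks_iff[OF m1 m2 b1 b2] assms(5,6)
  unfolding scalar_block_diags_def scalar_block_diag_def by auto

theorem corollary5p5:
  fixes scale :: "'k::field \<Rightarrow> 'a::ring_1 \<Rightarrow> 'a"
    and rho1 rho2 :: "'a \<Rightarrow> 'k mat" and n1 n2 :: nat
  assumes "alg_closed TYPE('k)"
    and "fd_algebra scale"
    and "is_module scale n1 rho1" and "is_module scale n2 rho2"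
    and "brick n1 rho1" and "brick n2 rho2"
    and "\<not> iso_mod n1 rho1 n2 rho2"
  shows "symmetric_alg (end_mod (n1 + n2) (dsum_rep n1 rho1 n2 rho2)) \<longleftrightarrow>
           (hom_mod n1 rho1 n2 rho2 = {0\<^sub>m n2 n1} \<and> hom_mod n2 rho2 n1 rho1 = {0\<^sub>m n1 n2})"
proof
  assume "symmetric_alg (end_mod (n1 + n2) (dsum_rep n1 rho1 n2 rho2))"
  with assms(3-7) show "hom_mod n1 rho1 n2 rho2 = {0\<^sub>m n2 n1} \<and> hom_mod n2 rho2 n1 rho1 = {0\<^sub>m n1 n2}"
    using symmetric_end_dsum_hom_12_zero symmetric_end_dsum_hom_21_zero
      zero_mem_hom_mod[OF assms(3,4)] zero_mem_hom_mod[OF assms(4,3)]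
    by blast
next
  assume "hom_mod n1 rho1 n2 rho2 = {0\<^sub>m n2 n1} \<and> hom_mod n2 rho2 n1 rho1 = {0\<^sub>m n1 n2}"
  then show "symmetric_alg (end_mod (n1 + n2) (dsum_rep n1 rho1 n2 rho2))"
    using end_dsum_eq_scalar_block_diags[OF assms(3-6)]
      symmetric_alg_scalar_block_diags[OF brick_dim_pos[OF assms(3,5)] brick_dim_pos[OF assms(4,6)]]
    by simp
qed

end
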